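(* Let $S=\{z\in\mathbb C:0<\operatorname{Im} z<1\}$. For every $M\ge1$ there is $K(M)\ge1$, with $\lim_{M\to1}K(M)=1$, such that the following holds: if $f_0,f_1\colon\mathbb R\to\mathbb R$ are diffeomorphisms with $1/M\le f_k'(x)\le M$ for $k=0,1$ and $|f_0(x)-f_1(x)|\le M-1$ for all $x\in\mathbb R$, then there exists a $K(M)$-quasiconformal map $f\colon S\to S$ whose boundary values satisfy $f(x+ik)=f_k(x)+ik$ for $k=0,1$ and all $x\in\mathbb R$. *)

theory Defs
  imports "HOL-Complex_Analysis.Complex_Analysis"
begin

definition strip :: "complex set" where
  "strip = {z. 0 < Im z \<and> Im z < 1}"

definition lin_dil :: "(complex \<Rightarrow> complex) \<Rightarrow> complex \<Rightarrow> ereal" where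
  "lin_dil f z = Limsup (at_right 0)
     (\<lambda>r. ereal ((SUP w\<in>sphere z r. cmod (f w - f z)) / (INF w\<in>sphere z r. cmod (f w - f z))))"

definition sense_preserving_on :: "complex set \<Rightarrow> (complex \<Rightarrow> complex) \<Rightarrow> bool" where
  "sense_preserving_on U f \<longleftrightarrow>
     (\<forall>z\<in>U. \<exists>e>0. \<forall>r. 0 < r \<and> r < e \<longrightarrow> winding_number (f \<circ> circlepath z r) (f z) = 1)"

text \<open>K-quasiconformal map on an open set U (metric definition; equivalent in the plane to the
  analytic definition): a sense-preserving homeomorphism onto its image whose linear dilatation
  is finite everywhere and at most K almost everywhere.\<close>
definition quasiconformal_on :: "real \<Rightarrow> complex set \<Rightarrow> (complex \<Rightarrow> complex) \<Rightarrow> bool" where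
  "quasiconformal_on K U f \<longleftrightarrow>
     K \<ge> 1 \<and> open U \<and> inj_on f U \<and> continuous_on U f \<and> continuous_on (f ` U) (inv_into U f) \<and>
     sense_preserving_on U f \<and>
     (\<forall>z\<in>U. lin_dil f z < \<infinity>) \<and>
     (AE z in lebesgue. z \<in> U \<longrightarrow> lin_dil f z \<le> ereal K)"

end

theory Submission
  imports Defs
begin

(* The interpolation F (x + iy) = (1 - y) f0 x + y f1 x + iy preserves Im and restricts to each
   horizontal line as a map with derivative in [1/M, M]. Split F w - F z = zeta + B, where zeta
   has as real part the increment of that map along the line Im = Im w and as imaginary part
   Im (w - z), and the real shear B = Im (w - z) (f1 - f0) (Re z) satisfies
   |B| <= (M - 1) |Im (w - z)|. The triangle inequality then gives
   |F w - F z| <= (2M - 1) |w - z| and |w - z| <= M^2 |F w - F z|, so F is a homeomorphism of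
   the strip with linear dilatation at most M^2 (2M - 1), which tends to 1 as M -> 1. It is
   sense-preserving because it increases Re along horizontal lines. *)

lemma slope_ge_of_deriv_ge:
  fixes g g' :: "real \<Rightarrow> real"
  assumes "\<And>x. (g has_real_derivative g' x) (at x)" and "\<And>x. m \<le> g' x" and "x \<le> x'"
  shows "m * (x' - x) \<le> g x' - g x"
proof -
  have "g x - m * x \<le> g x' - m * x'"
    by (rule deriv_nonneg_imp_mono[of x x' "\<lambda>t. g t - m * t" "\<lambda>t. g' t - m"])
      (use assms in \<open>auto intro!: derivative_eq_intros\<close>)
  then show ?thesis by (simp add: algebra_simps)
qed

lemma slope_le_of_deriv_le:
  fixes g g' :: "real \<Rightarrow> real"
  assumes "\<And>x. (g has_real_derivative g' x) (at x)" and "\<And>x. g' x \<le> L" and "x \<le> x'"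
  shows "g x' - g x \<le> L * (x' - x)"
proof -
  have "\<And>x. ((\<lambda>t. - g t) has_real_derivative - g' x) (at x)"
    using assms(1) by (rule DERIV_minus)
  from slope_ge_of_deriv_ge[OF this, of "- L" x x'] assms(2,3) show ?thesis by simp
qed

lemma dist_bounds_of_deriv_bounds:
  fixes g g' :: "real \<Rightarrow> real"
  assumes "\<And>x. (g has_real_derivative g' x) (at x)" and "\<And>x. m \<le> g' x" "\<And>x. g' x \<le> L"
    and "0 \<le> m"
  shows "m * \<bar>x' - x\<bar> \<le> \<bar>g x' - g x\<bar>" "\<bar>g x' - g x\<bar> \<le> L * \<bar>x' - x\<bar>"
proof -
  have "m * \<bar>x' - x\<bar> \<le> \<bar>g x' - g x\<bar> \<and> \<bar>g x' - g x\<bar> \<le> L * \<bar>x' - x\<bar>" if "x \<le> x'" for x x'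
    using slope_ge_of_deriv_ge[OF assms(1,2) that] slope_le_of_deriv_le[OF assms(1,3) that]
      mult_nonneg_nonneg[OF \<open>0 \<le> m\<close>, of "x' - x"] that by auto
  from this[of x x'] this[of x' x] show "m * \<bar>x' - x\<bar> \<le> \<bar>g x' - g x\<bar>" "\<bar>g x' - g x\<bar> \<le> L * \<bar>x' - x\<bar>"
    by (cases "x \<le> x'"; simp add: abs_minus_commute)+
qed

lemma surj_of_deriv_ge:
  fixes g g' :: "real \<Rightarrow> real"
  assumes deriv: "\<And>x. (g has_real_derivative g' x) (at x)" and "\<And>x. m \<le> g' x" and "0 < m"
  shows "surj g"
proof -
  have "t \<in> range g" for t
  proof -
    define X where "X = \<bar>t - g 0\<bar> / m"
    have "0 \<le> X" using \<open>0 < m\<close> by (simp add: X_def)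
    have "g (- X) \<le> t" "t \<le> g X"
      using slope_ge_of_deriv_ge[OF deriv assms(2), of "- X" 0] slope_ge_of_deriv_ge[OF deriv assms(2), of 0 X]
        \<open>0 \<le> X\<close> \<open>0 < m\<close> by (auto simp: X_def)
    moreover have "continuous_on {- X..X} g"
      using deriv by (intro continuous_at_imp_continuous_on ballI DERIV_isCont) auto
    ultimately obtain x where "g x = t"
      using IVT'[of g "- X" t X] \<open>0 \<le> X\<close> by auto
    then show ?thesis by blast
  qed
  then show ?thesis by blast
qed

lemma cmod_le_of_components_le:
  assumes "\<bar>Re u\<bar> \<le> c * \<bar>Re v\<bar>" "\<bar>Im u\<bar> \<le> c * \<bar>Im v\<bar>" "0 \<le> c"
  shows "cmod u \<le> c * cmod v"
proof (rule power2_le_imp_le)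
  have "\<bar>Re u\<bar>\<^sup>2 + \<bar>Im u\<bar>\<^sup>2 \<le> (c * \<bar>Re v\<bar>)\<^sup>2 + (c * \<bar>Im v\<bar>)\<^sup>2"
    using assms by (intro add_mono power_mono) auto
  also have "\<dots> = (c * cmod v)\<^sup>2"
    by (simp only: cmod_power2 power_mult_distrib power2_abs distrib_left)
  finally show "(cmod u)\<^sup>2 \<le> (c * cmod v)\<^sup>2"
    by (simp only: cmod_power2 power2_abs)
qed (use assms(3) in simp)

lemma lower_lipschitz_imp_inj_on:
  assumes "\<And>z w. z \<in> U \<Longrightarrow> w \<in> U \<Longrightarrow> dist z w \<le> C * dist (f z) (f w)"
  shows "inj_on f U"
proof (rule inj_onI)
  fix z w assume "z \<in> U" "w \<in> U" "f z = f w"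
  then show "z = w" using assms[of z w] by simp
qed

lemma lower_lipschitz_imp_lipschitz_inv_into:
  assumes "0 \<le> C" and "\<And>z w. z \<in> U \<Longrightarrow> w \<in> U \<Longrightarrow> dist z w \<le> C * dist (f z) (f w)"
  shows "C-lipschitz_on (f ` U) (inv_into U f)"
proof (rule lipschitz_onI)
  fix u v assume "u \<in> f ` U" "v \<in> f ` U"
  then obtain z w where "z \<in> U" "w \<in> U" "u = f z" "v = f w" by blast
  then show "dist (inv_into U f u) (inv_into U f v) \<le> C * dist u v"
    using assms(2) lower_lipschitz_imp_inj_on[OF assms(2)] by (simp add: inv_into_f_f)
qed (rule assms(1))

lemma lin_dil_le_of_bilipschitz_near:
  assumes "0 < e" "0 < C"
    and upper: "\<And>w. w \<in> ball z e \<Longrightarrow> cmod (f w - f z) \<le> L * cmod (w - z)"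
    and lower: "\<And>w. w \<in> ball z e \<Longrightarrow> cmod (w - z) \<le> C * cmod (f w - f z)"
  shows "lin_dil f z \<le> ereal (L * C)"
  unfolding lin_dil_def
proof (rule Limsup_bounded)
  show "\<forall>\<^sub>F r in at_right 0.
      ereal ((SUP w\<in>sphere z r. cmod (f w - f z)) / (INF w\<in>sphere z r. cmod (f w - f z))) \<le> ereal (L * C)"
    unfolding eventually_at_right_field
  proof (intro exI[of _ e] conjI allI impI)
    fix r :: real assume r: "0 < r" "r < e"
    have bounds: "cmod (f w - f z) \<le> L * r" "r / C \<le> cmod (f w - f z)" if "w \<in> sphere z r" for w
    proof -
      have "w \<in> ball z e" "cmod (w - z) = r"
        using that r by (auto simp: dist_norm norm_minus_commute)
      then show "cmod (f w - f z) \<le> L * r" "r / C \<le> cmod (f w - f z)"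
        using upper[of w] lower[of w] \<open>0 < C\<close> by (auto simp: divide_le_eq mult.commute)
    qed
    have "z + r \<in> sphere z r" using r by (simp add: dist_norm)
    from order_trans[OF norm_ge_zero bounds(1)[OF this]] have "0 \<le> L * r" .
    have sup: "(SUP w\<in>sphere z r. cmod (f w - f z)) \<le> L * r"
      using r bounds by (intro cSUP_least) auto
    have inf: "r / C \<le> (INF w\<in>sphere z r. cmod (f w - f z))"
      using r bounds by (intro cINF_greatest) auto
    have "(SUP w\<in>sphere z r. cmod (f w - f z)) / (INF w\<in>sphere z r. cmod (f w - f z)) \<le> (L * r) / (r / C)"
      using r \<open>0 < C\<close> \<open>0 \<le> L * r\<close> by (intro frac_le sup inf) auto
    also have "\<dots> = L * C" using r \<open>0 < C\<close> by simp
    finally show "ereal ((SUP w\<in>sphere z r. cmod (f w - f z)) / (INF w\<in>sphere z r. cmod (f w - f z)))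
        \<le> ereal (L * C)" by simp
  qed (rule \<open>0 < e\<close>)
qed

lemma winding_number_circlepath_image_eq_1:
  fixes f :: "complex \<Rightarrow> complex"
  assumes "0 < r" and "continuous_on (sphere z r) f"
    and no_opposite: "\<And>w. w \<in> sphere z r \<Longrightarrow> 0 \<notin> closed_segment (w - z) (f w - f z)"
  shows "winding_number (f \<circ> circlepath z r) (f z) = 1"
proof -
  have "winding_number (f \<circ> circlepath z r) (f z) = winding_number (circlepath (f z) r) (f z)"
  proof (rule winding_number_loops_linear_eq)
    show "path (f \<circ> circlepath z r)"
      using assms(1,2) by (intro path_continuous_image) auto
    fix t :: real assume "t \<in> {0..1}"
    define w where "w = circlepath z r t"
    have "w \<in> path_image (circlepath z r)" using \<open>t \<in> {0..1}\<close> by (auto simp: w_def path_image_def)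
    then have "w \<in> sphere z r" using \<open>0 < r\<close> by simp
    moreover have "circlepath (f z) r t = f z + (w - z)" by (simp add: w_def circlepath)
    ultimately show "f z \<notin> closed_segment (circlepath (f z) r t) ((f \<circ> circlepath z r) t)"
      using no_opposite closed_segment_translation_eq[of "f z" 0 "w - z" "f w - f z"] by (simp add: w_def)
  qed (auto simp: pathfinish_compose pathstart_compose)
  also have "\<dots> = 1" using \<open>0 < r\<close> by (rule winding_number_circlepath_centre)
  finally show ?thesis .
qed

lemma sense_preserving_on_if_horizontally_increasing:
  fixes f :: "complex \<Rightarrow> complex"
  assumes "open U" and "continuous_on U f"
    and Im_eq: "\<And>w. w \<in> U \<Longrightarrow> Im (f w) = Im w"
    and Re_less: "\<And>z w. z \<in> U \<Longrightarrow> w \<in> U \<Longrightarrow> Im z = Im w \<Longrightarrow> Re z < Re w \<Longrightarrow> Re (f z) < Re (f w)"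
  shows "sense_preserving_on U f"
  unfolding sense_preserving_on_def
proof
  fix z assume "z \<in> U"
  then obtain e where "0 < e" "ball z e \<subseteq> U" using \<open>open U\<close> open_contains_ball by blast
  have "winding_number (f \<circ> circlepath z r) (f z) = 1" if "0 < r" "r < e" for r
  proof (rule winding_number_circlepath_image_eq_1)
    have sphere: "sphere z r \<subseteq> U" using \<open>ball z e \<subseteq> U\<close> that by auto
    then show "continuous_on (sphere z r) f" using \<open>continuous_on U f\<close> by (rule continuous_on_subset[rotated])
    fix w assume "w \<in> sphere z r"
    then have "w \<in> U" "w \<noteq> z" using sphere \<open>0 < r\<close> by auto
    show "0 \<notin> closed_segment (w - z) (f w - f z)"
    proof
      assume "0 \<in> closed_segment (w - z) (f w - f z)"
      then obtain u where u: "0 \<le> u" "u \<le> 1" and 0: "0 = (1 - u) *\<^sub>R (w - z) + u *\<^sub>R (f w - f z)"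
        by (auto simp: in_segment)
      have "Im w = Im z" using arg_cong[OF 0, of Im] Im_eq[OF \<open>w \<in> U\<close>] Im_eq[OF \<open>z \<in> U\<close>]
        by (simp add: algebra_simps)
      \<comment> \<open>so w - z and f w - f z are nonzero reals of the same sign\<close>
      define a D where "a = Re w - Re z" and "D = Re (f w) - Re (f z)"
      have "a \<noteq> 0" using \<open>w \<noteq> z\<close> \<open>Im w = Im z\<close> by (simp add: a_def complex_eq_iff)
      then have "0 < a * D"
        using Re_less[OF \<open>z \<in> U\<close> \<open>w \<in> U\<close>] Re_less[OF \<open>w \<in> U\<close> \<open>z \<in> U\<close>] \<open>Im w = Im z\<close>
        by (cases "0 < a") (auto simp: a_def D_def intro: mult_pos_pos mult_neg_neg)
      have "0 = a * ((1 - u) * a + u * D)"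
        using arg_cong[OF 0, of Re] by (simp add: a_def D_def)
      then have "(1 - u) * (a * a) + u * (a * D) = 0" by (simp add: algebra_simps)
      moreover have "0 \<le> (1 - u) * (a * a)" "0 \<le> u * (a * D)" using u \<open>0 < a * D\<close> by auto
      ultimately have "u * (a * D) = 0" "(1 - u) * (a * a) = 0" by linarith+
      then show False using \<open>0 < a * D\<close> \<open>a \<noteq> 0\<close> by simp
    qed
  qed (use that in auto)
  with \<open>0 < e\<close> show "\<exists>e>0. \<forall>r. 0 < r \<and> r < e \<longrightarrow> winding_number (f \<circ> circlepath z r) (f z) = 1"
    by blast
qed

lemma open_strip: "open strip"
proof -
  have "strip = {z. 0 < Im z} \<inter> {z. Im z < 1}" by (auto simp: strip_def)
  then show ?thesis by (metis open_Int open_halfspace_Im_gt open_halfspace_Im_lt)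
qed

definition dilatation_bound :: "real \<Rightarrow> real" where
  "dilatation_bound M = M\<^sup>2 * (2 * M - 1)"

lemma dilatation_bound_ge_1: "1 \<le> M \<Longrightarrow> 1 \<le> dilatation_bound M"
  using mult_mono[of 1 "M\<^sup>2" 1 "2 * M - 1"] by (simp add: dilatation_bound_def one_le_power)

lemma dilatation_bound_tendsto_1: "(dilatation_bound \<longlongrightarrow> 1) (at_right 1)"
proof -
  have "((\<lambda>M::real. M\<^sup>2 * (2 * M - 1)) \<longlongrightarrow> 1\<^sup>2 * (2 * 1 - 1)) (at_right 1)"
    by (intro tendsto_intros)
  then show ?thesis by (simp add: dilatation_bound_def[abs_def])
qed

locale strip_boundary_maps =
  fixes M :: real and f0 f1 f0' f1' :: "real \<Rightarrow> real"
  assumes M: "1 \<le> M"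
    and deriv0: "\<And>x. (f0 has_real_derivative f0' x) (at x)"
    and deriv1: "\<And>x. (f1 has_real_derivative f1' x) (at x)"
    and deriv0_bounds: "\<And>x. 1 / M \<le> f0' x \<and> f0' x \<le> M"
    and deriv1_bounds: "\<And>x. 1 / M \<le> f1' x \<and> f1' x \<le> M"
    and close: "\<And>x. \<bar>f0 x - f1 x\<bar> \<le> M - 1"
begin

definition level :: "real \<Rightarrow> real \<Rightarrow> real" where
  "level y x = (1 - y) * f0 x + y * f1 x"

definition interp :: "complex \<Rightarrow> complex" where
  "interp z = Complex (level (Im z) (Re z)) (Im z)"

lemma Re_interp [simp]: "Re (interp z) = level (Im z) (Re z)"
  and Im_interp [simp]: "Im (interp z) = Im z"
  by (simp_all add: interp_def)

lemma level_deriv: "(level y has_real_derivative (1 - y) * f0' x + y * f1' x) (at x)"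
  unfolding level_def[abs_def] using deriv0 deriv1 by (auto intro!: derivative_eq_intros)

lemma level_deriv_bounds:
  assumes "0 \<le> y" "y \<le> 1"
  shows "1 / M \<le> (1 - y) * f0' x + y * f1' x" "(1 - y) * f0' x + y * f1' x \<le> M"
proof -
  have "(1 - y) * (1 / M) \<le> (1 - y) * f0' x" "y * (1 / M) \<le> y * f1' x"
    "(1 - y) * f0' x \<le> (1 - y) * M" "y * f1' x \<le> y * M"
    using assms deriv0_bounds[of x] deriv1_bounds[of x]
    by (simp_all only: mult_left_mono diff_ge_0_iff_ge)
  moreover have "(1 - y) * (1 / M) + y * (1 / M) = 1 / M" "(1 - y) * M + y * M = M"
    by (simp_all only: distrib_right[symmetric] diff_add_cancel mult_1)
  ultimately show "1 / M \<le> (1 - y) * f0' x + y * f1' x" "(1 - y) * f0' x + y * f1' x \<le> M"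
    by linarith+
qed

lemma level_dist_bounds:
  assumes "0 \<le> y" "y \<le> 1"
  shows "\<bar>level y x' - level y x\<bar> \<le> M * \<bar>x' - x\<bar>" "\<bar>x' - x\<bar> \<le> M * \<bar>level y x' - level y x\<bar>"
proof -
  note bounds = dist_bounds_of_deriv_bounds[OF level_deriv level_deriv_bounds[OF assms]]
  show "\<bar>level y x' - level y x\<bar> \<le> M * \<bar>x' - x\<bar>" using bounds(2) M by simp
  show "\<bar>x' - x\<bar> \<le> M * \<bar>level y x' - level y x\<bar>" using bounds(1)[of x' x] M by (simp add: field_simps)
qed

lemma level_strict_mono:
  assumes "0 \<le> y" "y \<le> 1" "x < x'"
  shows "level y x < level y x'"
proof -
  have "0 < 1 / M * (x' - x)" using M assms(3) by simp
  also have "\<dots> \<le> level y x' - level y x"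
    using slope_ge_of_deriv_ge[OF level_deriv level_deriv_bounds(1)[OF assms(1,2)]] assms(3) by simp
  finally show ?thesis by simp
qed

lemma surj_level: "0 \<le> y \<Longrightarrow> y \<le> 1 \<Longrightarrow> surj (level y)"
  using surj_of_deriv_ge[OF level_deriv level_deriv_bounds(1)] M by simp

lemma interp_dist_bounds:
  assumes "0 \<le> Im z" "Im z \<le> 1" "0 \<le> Im w" "Im w \<le> 1"
  shows "cmod (interp w - interp z) \<le> (2 * M - 1) * cmod (w - z)"
    and "cmod (w - z) \<le> M\<^sup>2 * cmod (interp w - interp z)"
proof -
  define \<zeta> where "\<zeta> = Complex (level (Im w) (Re w) - level (Im w) (Re z)) (Im w - Im z)"
  define B where "B = (Im w - Im z) * (f1 (Re z) - f0 (Re z))"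
  have decomp: "interp w - interp z = \<zeta> + of_real B"
    by (simp add: complex_eq_iff \<zeta>_def B_def level_def algebra_simps)
  have B: "\<bar>B\<bar> \<le> (M - 1) * \<bar>Im (w - z)\<bar>"
  proof -
    have "\<bar>Im w - Im z\<bar> * \<bar>f1 (Re z) - f0 (Re z)\<bar> \<le> \<bar>Im w - Im z\<bar> * (M - 1)"
      using close[of "Re z"] by (intro mult_left_mono) (auto simp: abs_minus_commute)
    then show ?thesis by (simp add: B_def abs_mult mult.commute)
  qed
  have "\<bar>Im w - Im z\<bar> \<le> M * \<bar>Im w - Im z\<bar>" using M by (simp add: mult_le_cancel_right1)
  then have \<zeta>: "cmod \<zeta> \<le> M * cmod (w - z)" "cmod (w - z) \<le> M * cmod \<zeta>"
    using level_dist_bounds[OF assms(3,4), of "Re w" "Re z"] M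
    by (auto simp: \<zeta>_def intro!: cmod_le_of_components_le)
  have Im_le: "\<bar>Im (w - z)\<bar> \<le> cmod (w - z)" "\<bar>Im (w - z)\<bar> \<le> cmod (interp w - interp z)"
    using abs_Im_le_cmod[of "w - z"] abs_Im_le_cmod[of "interp w - interp z"] by simp_all
  have "0 \<le> M - 1" using M by simp
  have B_le: "\<bar>B\<bar> \<le> (M - 1) * cmod (w - z)" "\<bar>B\<bar> \<le> (M - 1) * cmod (interp w - interp z)"
    by (rule order_trans[OF B mult_left_mono[OF Im_le(1) \<open>0 \<le> M - 1\<close>]],
        rule order_trans[OF B mult_left_mono[OF Im_le(2) \<open>0 \<le> M - 1\<close>]])
  have "cmod (interp w - interp z) \<le> cmod \<zeta> + \<bar>B\<bar>" by (simp add: decomp norm_triangle_le)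
  also have "\<dots> \<le> M * cmod (w - z) + (M - 1) * cmod (w - z)"
    using \<zeta>(1) B_le(1) by (rule add_mono)
  finally show "cmod (interp w - interp z) \<le> (2 * M - 1) * cmod (w - z)" by (simp add: algebra_simps)
  have "cmod \<zeta> \<le> cmod (interp w - interp z) + \<bar>B\<bar>"
    using norm_triangle_ineq4[of "interp w - interp z" "of_real B"] by (simp add: decomp)
  also have "\<dots> \<le> cmod (interp w - interp z) + (M - 1) * cmod (interp w - interp z)"
    using B_le(2) by simp
  finally have "cmod \<zeta> \<le> M * cmod (interp w - interp z)" by (simp add: algebra_simps)
  then have "M * cmod \<zeta> \<le> M * (M * cmod (interp w - interp z))" using M by simp
  with \<zeta>(2) show "cmod (w - z) \<le> M\<^sup>2 * cmod (interp w - interp z)"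
    by (simp add: power2_eq_square mult.assoc)
qed

lemma continuous_on_interp: "continuous_on A interp"
proof -
  have "continuous_on UNIV f0" "continuous_on UNIV f1"
    using deriv0 deriv1 by (auto intro: continuous_at_imp_continuous_on DERIV_isCont)
  then have "continuous_on A (\<lambda>z. f0 (Re z))" "continuous_on A (\<lambda>z. f1 (Re z))"
    by (auto intro: continuous_on_compose2[OF _ continuous_on_Re[OF continuous_on_id]])
  then show ?thesis
    unfolding interp_def[abs_def] level_def by (intro continuous_intros)
qed

lemma interp_image_strip: "interp ` strip = strip"
proof
  show "interp ` strip \<subseteq> strip" by (auto simp: strip_def)
  show "strip \<subseteq> interp ` strip"
  proof
    fix u assume "u \<in> strip"
    then have "surj (level (Im u))" by (simp add: strip_def surj_level)
    then obtain x where "level (Im u) x = Re u" by (metis surjD)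
    then have "interp (Complex x (Im u)) = u" by (simp add: complex_eq_iff)
    moreover have "Complex x (Im u) \<in> strip" using \<open>u \<in> strip\<close> by (simp add: strip_def)
    ultimately show "u \<in> interp ` strip" by (metis rev_image_eqI)
  qed
qed

lemma quasiconformal_on_interp: "quasiconformal_on (dilatation_bound M) strip interp"
proof -
  have closed_strip: "0 \<le> Im z \<and> Im z \<le> 1" if "z \<in> strip" for z using that by (simp add: strip_def)
  have lower: "dist z w \<le> M\<^sup>2 * dist (interp z) (interp w)" if "z \<in> strip" "w \<in> strip" for z w
    using interp_dist_bounds(2)[of w z] closed_strip[OF that(1)] closed_strip[OF that(2)] by (simp add: dist_norm)
  have dil: "lin_dil interp z \<le> ereal (dilatation_bound M)" if "z \<in> strip" for z
  proof -
    obtain e where "0 < e" "ball z e \<subseteq> strip" using open_strip \<open>z \<in> strip\<close> open_contains_ball by blast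
    then have "w \<in> ball z e \<Longrightarrow> 0 \<le> Im w \<and> Im w \<le> 1" for w using closed_strip by blast
    then have "lin_dil interp z \<le> ereal ((2 * M - 1) * M\<^sup>2)"
      using \<open>0 < e\<close> M closed_strip[OF that]
      by (intro lin_dil_le_of_bilipschitz_near interp_dist_bounds) auto
    then show ?thesis by (simp add: dilatation_bound_def mult.commute)
  qed
  show ?thesis
    unfolding quasiconformal_on_def
  proof (intro conjI ballI AE_I2 impI)
    show "1 \<le> dilatation_bound M" using M by (rule dilatation_bound_ge_1)
    show "inj_on interp strip" using lower by (rule lower_lipschitz_imp_inj_on)
    show "continuous_on (interp ` strip) (inv_into strip interp)"
      using lower_lipschitz_imp_lipschitz_inv_into[OF _ lower] by (auto intro: lipschitz_on_continuous_on)
    show "sense_preserving_on strip interp"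
      using open_strip continuous_on_interp
      by (rule sense_preserving_on_if_horizontally_increasing) (auto simp: strip_def intro: level_strict_mono)
    show "lin_dil interp z < \<infinity>" if "z \<in> strip" for z
      by (rule le_less_trans[OF dil[OF that]]) simp
  qed (use dil open_strip continuous_on_interp in auto)
qed

lemma quasiconformal_extension:
  "\<exists>f. quasiconformal_on (dilatation_bound M) strip f \<and> f ` strip = strip \<and>
     continuous_on (closure strip) f \<and>
     (\<forall>x. f (complex_of_real x) = complex_of_real (f0 x)) \<and>
     (\<forall>x. f (complex_of_real x + \<i>) = complex_of_real (f1 x) + \<i>)"
  using quasiconformal_on_interp interp_image_strip continuous_on_interp
  by (intro exI[of _ interp]) (simp add: complex_eq_iff level_def)

end

theorem lemma1:
  shows "\<exists>K :: real \<Rightarrow> real. (\<forall>M\<ge>1. K M \<ge> 1) \<and> (K \<longlongrightarrow> 1) (at_right 1) \<and>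
    (\<forall>M f0 f1 f0' f1'. M \<ge> 1 \<and>
       bij (f0 :: real \<Rightarrow> real) \<and> bij (f1 :: real \<Rightarrow> real) \<and>
       (\<forall>x. (f0 has_real_derivative f0' x) (at x)) \<and> continuous_on UNIV f0' \<and>
       (\<forall>x. (f1 has_real_derivative f1' x) (at x)) \<and> continuous_on UNIV f1' \<and>
       (\<forall>x. 1 / M \<le> f0' x \<and> f0' x \<le> M) \<and> (\<forall>x. 1 / M \<le> f1' x \<and> f1' x \<le> M) \<and>
       (\<forall>x. \<bar>f0 x - f1 x\<bar> \<le> M - 1)
     \<longrightarrow> (\<exists>f :: complex \<Rightarrow> complex.
            quasiconformal_on (K M) strip f \<and> f ` strip = strip \<and>
            continuous_on (closure strip) f \<and>
            (\<forall>x. f (complex_of_real x) = complex_of_real (f0 x)) \<and>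
            (\<forall>x. f (complex_of_real x + \<i>) = complex_of_real (f1 x) + \<i>)))"
  using dilatation_bound_ge_1 dilatation_bound_tendsto_1
  by (intro exI[of _ dilatation_bound])
    (auto intro: strip_boundary_maps.quasiconformal_extension simp: strip_boundary_maps_def)

end
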